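(* Let $R$ be a commutative ring with $1\neq 0$, $S\subseteq R$ a multiplicatively closed subset, and $M$ an $S$-comultiplication $R$-module. If $N$ is an $S$-copure submodule of $M$, then $M/N$ is an $S$-comultiplication $R$-module.
   Context: All rings are commutative with $1\neq 0$ and all modules are unital. A multiplicatively closed subset (m.c.s.) $S$ of $R$ is a subset with $0\notin S$, $1\in S$, and $ss'\in S$ for all $s,s'\in S$. For an ideal $I$ and submodule $L$, $(L:_M I)=\{m\in M: Im\subseteq L\}$ and $(0:_M I)=\{m\in M: Im=0\}$. $M$ is an $S$-comultiplication module if for each submodule $N$ of $M$ there exist $s\in S$ and an ideal $I$ of $R$ with $s(0:_M I)\subseteq N\subseteq (0:_M I)$. A submodule $L$ of $M$ is $S$-copure if there exists $s\in S$ such that $s(L:_M I)\subseteq L+(0:_M I)$ for every ideal $I$ of $R$. *)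

theory Defs
  imports "HOL-Algebra.Module" "HOL-Algebra.AbelCoset" "HOL-Algebra.Ideal"
begin

definition mcs :: "('a, 'c) ring_scheme \<Rightarrow> 'a set \<Rightarrow> bool" where
  "mcs R S \<longleftrightarrow> S \<subseteq> carrier R \<and> \<zero>\<^bsub>R\<^esub> \<notin> S \<and> \<one>\<^bsub>R\<^esub> \<in> S \<and>
     (\<forall>s\<in>S. \<forall>t\<in>S. s \<otimes>\<^bsub>R\<^esub> t \<in> S)"

definition ann :: "('a, 'b, 'd) module_scheme \<Rightarrow> 'a set \<Rightarrow> 'b set" where
  "ann M I = {m \<in> carrier M. \<forall>a\<in>I. a \<odot>\<^bsub>M\<^esub> m = \<zero>\<^bsub>M\<^esub>}"

definition colon :: "('a, 'b, 'd) module_scheme \<Rightarrow> 'b set \<Rightarrow> 'a set \<Rightarrow> 'b set" where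
  "colon M L I = {m \<in> carrier M. \<forall>a\<in>I. a \<odot>\<^bsub>M\<^esub> m \<in> L}"

definition smult_set :: "('a, 'b, 'd) module_scheme \<Rightarrow> 'a \<Rightarrow> 'b set \<Rightarrow> 'b set" where
  "smult_set M s X = (\<lambda>x. s \<odot>\<^bsub>M\<^esub> x) ` X"

definition S_comultiplication ::
  "('a, 'c) ring_scheme \<Rightarrow> 'a set \<Rightarrow> ('a, 'b, 'd) module_scheme \<Rightarrow> bool" where
  "S_comultiplication R S M \<longleftrightarrow>
     (\<forall>N. submodule N R M \<longrightarrow>
        (\<exists>s\<in>S. \<exists>I. ideal I R \<and> smult_set M s (ann M I) \<subseteq> N \<and> N \<subseteq> ann M I))"

definition S_copure ::
  "('a, 'c) ring_scheme \<Rightarrow> 'a set \<Rightarrow> ('a, 'b, 'd) module_scheme \<Rightarrow> 'b set \<Rightarrow> bool" where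
  "S_copure R S M L \<longleftrightarrow>
     (\<exists>s\<in>S. \<forall>I. ideal I R \<longrightarrow> smult_set M s (colon M L I) \<subseteq> L <+>\<^bsub>M\<^esub> ann M I)"

text \<open>The multiplicative fields of the record are
  irrelevant for modules and are filled with dummies.\<close>
definition quot_module :: "('a, 'b, 'd) module_scheme \<Rightarrow> 'b set \<Rightarrow> ('a, 'b set) module" where
  "quot_module M N =
     \<lparr>carrier = a_rcosets\<^bsub>M\<^esub> N, monoid.mult = (\<lambda>X Y. N), one = N,
      zero = N, add = set_add M,
      smult = (\<lambda>r X. ((\<lambda>x. r \<odot>\<^bsub>M\<^esub> x) ` X) <+>\<^bsub>M\<^esub> N)\<rparr>"

end

theory Submission
  imports Defs
begin

text \<open>Transport the comultiplication data along the projection \<open>M \<rightarrow> M/N\<close>.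
  A submodule \<open>K\<close> of \<open>M/N\<close> has a preimage \<open>L \<supseteq> N\<close> in \<open>M\<close>, and comultiplicativity of
  \<open>M\<close> gives \<open>s \<in> S\<close> and an ideal \<open>I\<close> with \<open>s (0 :\<^sub>M I) \<subseteq> L \<subseteq> (0 :\<^sub>M I)\<close>. The annihilator of
  \<open>I\<close> in \<open>M/N\<close> is the image of \<open>(N :\<^sub>M I)\<close>, and copurity of \<open>N\<close> gives \<open>t \<in> S\<close> with
  \<open>t (N :\<^sub>M I) \<subseteq> N + (0 :\<^sub>M I)\<close>. Hence \<open>st (N :\<^sub>M I) \<subseteq> s N + s (0 :\<^sub>M I) \<subseteq> L\<close>, that is
  \<open>st (0 :\<^bsub>M/N\<^esub> I) \<subseteq> K \<subseteq> (0 :\<^bsub>M/N\<^esub> I)\<close>.\<close>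

lemma ann_subset_colon:
  assumes "\<zero>\<^bsub>M\<^esub> \<in> L"
  shows "ann M I \<subseteq> colon M L I"
  using assms unfolding ann_def colon_def by auto

lemma (in module) smult_colon_subset:
  assumes "submodule L R M" and "N \<subseteq> L" and "s \<in> carrier R" and "t \<in> carrier R"
    and "smult_set M s (ann M I) \<subseteq> L"
    and "smult_set M t (colon M N I) \<subseteq> N <+>\<^bsub>M\<^esub> ann M I"
  shows "smult_set M (s \<otimes>\<^bsub>R\<^esub> t) (colon M N I) \<subseteq> L"
proof
  fix y assume "y \<in> smult_set M (s \<otimes>\<^bsub>R\<^esub> t) (colon M N I)"
  then obtain x where x: "x \<in> colon M N I" and y: "y = (s \<otimes>\<^bsub>R\<^esub> t) \<odot>\<^bsub>M\<^esub> x"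
    unfolding smult_set_def by auto
  have "t \<odot>\<^bsub>M\<^esub> x \<in> N <+>\<^bsub>M\<^esub> ann M I"
    using x assms(6) unfolding smult_set_def by auto
  then obtain n m where n: "n \<in> N" and m: "m \<in> ann M I" and tx: "t \<odot>\<^bsub>M\<^esub> x = n \<oplus>\<^bsub>M\<^esub> m"
    unfolding set_add_def' by auto
  have carr: "x \<in> carrier M" "n \<in> carrier M" "m \<in> carrier M"
    using x n m assms(1,2) submoduleE(1) unfolding colon_def ann_def by auto
  have "s \<odot>\<^bsub>M\<^esub> n \<in> L" using n assms(1-3) submoduleE(4) by blast
  moreover have "s \<odot>\<^bsub>M\<^esub> m \<in> L" using m assms(5) unfolding smult_set_def by auto
  moreover have "y = s \<odot>\<^bsub>M\<^esub> n \<oplus>\<^bsub>M\<^esub> s \<odot>\<^bsub>M\<^esub> m"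
    using y tx carr assms(3,4) by (simp add: smult_assoc1 smult_r_distr)
  ultimately show "y \<in> L" using assms(1) submoduleE(5) by blast
qed

definition quot_preimage :: "('a, 'b, 'd) module_scheme \<Rightarrow> 'b set \<Rightarrow> 'b set set \<Rightarrow> 'b set" where
  "quot_preimage M N K = {x \<in> carrier M. N +>\<^bsub>M\<^esub> x \<in> K}"

context
  fixes R :: "('a, 'c) ring_scheme" and M :: "('a, 'b, 'd) module_scheme" and N :: "'b set"
  assumes module: "module R M" and submodule: "submodule N R M"
begin

interpretation M: module R M by (rule module)

interpretation N: abelian_subgroup N M
  by (rule abelian_subgroupI3[OF additive_subgroup.intro[OF submodule.axioms(1)[OF submodule]]])
    (rule M.abelian_group_axioms)

lemma submodule_subset_carrier: "N \<subseteq> carrier M"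
  using M.submoduleE(1)[OF submodule] .

lemma carrier_quot_module: "carrier (quot_module M N) = (\<lambda>x. N +>\<^bsub>M\<^esub> x) ` carrier M"
  unfolding quot_module_def A_RCOSETS_def RCOSETS_def a_r_coset_def by auto

lemma zero_quot_module: "\<zero>\<^bsub>quot_module M N\<^esub> = N"
  unfolding quot_module_def by simp

lemma rcos_eq_submodule_iff: "x \<in> carrier M \<Longrightarrow> N +>\<^bsub>M\<^esub> x = N \<longleftrightarrow> x \<in> N"
  using N.a_rcos_self N.a_rcos_const by metis

lemma add_quot_module:
  "x \<in> carrier M \<Longrightarrow> y \<in> carrier M \<Longrightarrow>
   (N +>\<^bsub>M\<^esub> x) \<oplus>\<^bsub>quot_module M N\<^esub> (N +>\<^bsub>M\<^esub> y) = N +>\<^bsub>M\<^esub> (x \<oplus>\<^bsub>M\<^esub> y)"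
  unfolding quot_module_def by (simp add: N.a_rcos_sum)

lemma smult_rcos_subset:
  assumes "r \<in> carrier R" and "x \<in> carrier M"
  shows "(\<lambda>y. r \<odot>\<^bsub>M\<^esub> y) ` (N +>\<^bsub>M\<^esub> x) \<subseteq> N +>\<^bsub>M\<^esub> (r \<odot>\<^bsub>M\<^esub> x)"
proof (rule image_subsetI)
  fix y assume "y \<in> N +>\<^bsub>M\<^esub> x"
  then obtain h where h: "h \<in> N" and y: "y = h \<oplus>\<^bsub>M\<^esub> x"
    unfolding a_r_coset_def' by auto
  have "r \<odot>\<^bsub>M\<^esub> y = r \<odot>\<^bsub>M\<^esub> h \<oplus>\<^bsub>M\<^esub> r \<odot>\<^bsub>M\<^esub> x"
    using assms h y submodule_subset_carrier by (auto simp: M.smult_r_distr)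
  moreover have "r \<odot>\<^bsub>M\<^esub> h \<in> N" using assms(1) h M.submoduleE(4)[OF submodule] by blast
  ultimately show "r \<odot>\<^bsub>M\<^esub> y \<in> N +>\<^bsub>M\<^esub> (r \<odot>\<^bsub>M\<^esub> x)"
    unfolding a_r_coset_def' by blast
qed

lemma smult_quot_module:
  assumes r: "r \<in> carrier R" and x: "x \<in> carrier M"
  shows "r \<odot>\<^bsub>quot_module M N\<^esub> (N +>\<^bsub>M\<^esub> x) = N +>\<^bsub>M\<^esub> (r \<odot>\<^bsub>M\<^esub> x)"
proof -
  let ?img = "(\<lambda>y. r \<odot>\<^bsub>M\<^esub> y) ` (N +>\<^bsub>M\<^esub> x)"
  have rx: "r \<odot>\<^bsub>M\<^esub> x \<in> carrier M" using r x by simp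
  have "?img <+>\<^bsub>M\<^esub> N \<subseteq> (N +>\<^bsub>M\<^esub> (r \<odot>\<^bsub>M\<^esub> x)) <+>\<^bsub>M\<^esub> (N +>\<^bsub>M\<^esub> \<zero>\<^bsub>M\<^esub>)"
    unfolding set_add_def
    by (simp add: N.a_rcos_const[OF N.zero_closed] mono_set_mult smult_rcos_subset[OF r x])
  also have "\<dots> = N +>\<^bsub>M\<^esub> (r \<odot>\<^bsub>M\<^esub> x)" using rx by (simp add: N.a_rcos_sum)
  finally have "?img <+>\<^bsub>M\<^esub> N \<subseteq> N +>\<^bsub>M\<^esub> (r \<odot>\<^bsub>M\<^esub> x)" .
  moreover have "N +>\<^bsub>M\<^esub> (r \<odot>\<^bsub>M\<^esub> x) \<subseteq> ?img <+>\<^bsub>M\<^esub> N"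
  proof
    fix z assume "z \<in> N +>\<^bsub>M\<^esub> (r \<odot>\<^bsub>M\<^esub> x)"
    then obtain h where h: "h \<in> N" and z: "z = h \<oplus>\<^bsub>M\<^esub> r \<odot>\<^bsub>M\<^esub> x"
      unfolding a_r_coset_def' by auto
    have "z = r \<odot>\<^bsub>M\<^esub> x \<oplus>\<^bsub>M\<^esub> h" using z h rx submodule_subset_carrier by (auto simp: M.a_comm)
    moreover have "r \<odot>\<^bsub>M\<^esub> x \<in> ?img" using N.a_rcos_self[OF x] by blast
    ultimately show "z \<in> ?img <+>\<^bsub>M\<^esub> N" unfolding set_add_def' using h by blast
  qed
  ultimately show ?thesis unfolding quot_module_def by simp
qed

lemma module_quot_module: "module R (quot_module M N)"
proof -
  let ?Q = "quot_module M N"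
  let ?p = "\<lambda>x. N +>\<^bsub>M\<^esub> x"
  have rep: "\<And>X. X \<in> carrier ?Q \<Longrightarrow> \<exists>x\<in>carrier M. X = ?p x"
    and mem: "\<And>x. x \<in> carrier M \<Longrightarrow> ?p x \<in> carrier ?Q"
    using carrier_quot_module by auto
  have zero: "\<zero>\<^bsub>?Q\<^esub> = ?p \<zero>\<^bsub>M\<^esub>"
    using zero_quot_module N.a_rcos_const[OF N.zero_closed] by simp
  have "abelian_group ?Q"
  proof (rule abelian_groupI)
    fix X Y assume "X \<in> carrier ?Q" "Y \<in> carrier ?Q"
    then obtain x y where "x \<in> carrier M" "y \<in> carrier M" "X = ?p x" "Y = ?p y" using rep by metis
    then show "X \<oplus>\<^bsub>?Q\<^esub> Y \<in> carrier ?Q" "X \<oplus>\<^bsub>?Q\<^esub> Y = Y \<oplus>\<^bsub>?Q\<^esub> X"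
      by (simp_all add: add_quot_module mem M.a_comm)
  next
    show "\<zero>\<^bsub>?Q\<^esub> \<in> carrier ?Q" by (simp add: zero mem)
  next
    fix X Y Z assume "X \<in> carrier ?Q" "Y \<in> carrier ?Q" "Z \<in> carrier ?Q"
    then obtain x y z where "x \<in> carrier M" "y \<in> carrier M" "z \<in> carrier M"
      "X = ?p x" "Y = ?p y" "Z = ?p z" using rep by metis
    then show "X \<oplus>\<^bsub>?Q\<^esub> Y \<oplus>\<^bsub>?Q\<^esub> Z = X \<oplus>\<^bsub>?Q\<^esub> (Y \<oplus>\<^bsub>?Q\<^esub> Z)"
      by (simp add: add_quot_module M.a_assoc)
  next
    fix X assume "X \<in> carrier ?Q"
    then obtain x where x: "x \<in> carrier M" "X = ?p x" using rep by metis
    then show "\<zero>\<^bsub>?Q\<^esub> \<oplus>\<^bsub>?Q\<^esub> X = X" by (simp add: zero add_quot_module)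
    have "?p (\<ominus>\<^bsub>M\<^esub> x) \<oplus>\<^bsub>?Q\<^esub> X = \<zero>\<^bsub>?Q\<^esub>" using x by (simp add: zero add_quot_module M.l_neg)
    then show "\<exists>y\<in>carrier ?Q. y \<oplus>\<^bsub>?Q\<^esub> X = \<zero>\<^bsub>?Q\<^esub>" using mem x by blast
  qed
  then show ?thesis
  proof (rule moduleI[OF M.R.is_cring])
    fix a X assume a: "a \<in> carrier R" and "X \<in> carrier ?Q"
    then obtain x where "x \<in> carrier M" "X = ?p x" using rep by metis
    then show "a \<odot>\<^bsub>?Q\<^esub> X \<in> carrier ?Q" using a by (simp add: smult_quot_module mem)
  next
    fix a b X assume a: "a \<in> carrier R" "b \<in> carrier R" and "X \<in> carrier ?Q"
    then obtain x where "x \<in> carrier M" "X = ?p x" using rep by metis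
    then show "(a \<oplus>\<^bsub>R\<^esub> b) \<odot>\<^bsub>?Q\<^esub> X = a \<odot>\<^bsub>?Q\<^esub> X \<oplus>\<^bsub>?Q\<^esub> b \<odot>\<^bsub>?Q\<^esub> X"
      "(a \<otimes>\<^bsub>R\<^esub> b) \<odot>\<^bsub>?Q\<^esub> X = a \<odot>\<^bsub>?Q\<^esub> (b \<odot>\<^bsub>?Q\<^esub> X)"
      using a by (simp_all add: smult_quot_module add_quot_module M.smult_l_distr M.smult_assoc1)
  next
    fix a X Y assume a: "a \<in> carrier R" and "X \<in> carrier ?Q" "Y \<in> carrier ?Q"
    then obtain x y where "x \<in> carrier M" "y \<in> carrier M" "X = ?p x" "Y = ?p y" using rep by metis
    then show "a \<odot>\<^bsub>?Q\<^esub> (X \<oplus>\<^bsub>?Q\<^esub> Y) = a \<odot>\<^bsub>?Q\<^esub> X \<oplus>\<^bsub>?Q\<^esub> a \<odot>\<^bsub>?Q\<^esub> Y"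
      using a by (simp add: smult_quot_module add_quot_module M.smult_r_distr)
  next
    fix X assume "X \<in> carrier ?Q"
    then obtain x where "x \<in> carrier M" "X = ?p x" using rep by metis
    then show "\<one>\<^bsub>R\<^esub> \<odot>\<^bsub>?Q\<^esub> X = X" by (simp add: smult_quot_module)
  qed
qed

lemma smult_set_quot_module:
  assumes "r \<in> carrier R" and "X \<subseteq> carrier M"
  shows "smult_set (quot_module M N) r ((\<lambda>x. N +>\<^bsub>M\<^esub> x) ` X)
    = (\<lambda>x. N +>\<^bsub>M\<^esub> x) ` smult_set M r X"
  using assms unfolding smult_set_def by (force simp: smult_quot_module image_image)

lemma image_quot_preimage:
  assumes "K \<subseteq> carrier (quot_module M N)"
  shows "(\<lambda>x. N +>\<^bsub>M\<^esub> x) ` quot_preimage M N K = K"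
  using assms unfolding quot_preimage_def carrier_quot_module by blast

lemma submodule_subset_quot_preimage:
  assumes "submodule K R (quot_module M N)"
  shows "N \<subseteq> quot_preimage M N K"
proof -
  have "\<zero>\<^bsub>quot_module M N\<^esub> \<in> K"
    using additive_subgroup.zero_closed[OF additive_subgroup.intro[OF submodule.axioms(1)[OF assms]]] .
  then show ?thesis
    using submodule_subset_carrier N.a_rcos_const
    unfolding zero_quot_module quot_preimage_def by auto
qed

lemma submodule_quot_preimage:
  assumes K: "submodule K R (quot_module M N)"
  shows "submodule (quot_preimage M N K) R M"
proof -
  interpret Q: module R "quot_module M N" by (rule module_quot_module)
  show ?thesis
  proof (rule M.submoduleI)
    show "\<zero>\<^bsub>M\<^esub> \<in> quot_preimage M N K"
      using submodule_subset_quot_preimage[OF K] N.zero_closed by blast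
  next
    fix x assume "x \<in> quot_preimage M N K"
    then have x: "x \<in> carrier M" "N +>\<^bsub>M\<^esub> x \<in> K" unfolding quot_preimage_def by auto
    then have "(\<ominus>\<^bsub>R\<^esub> \<one>\<^bsub>R\<^esub>) \<odot>\<^bsub>quot_module M N\<^esub> (N +>\<^bsub>M\<^esub> x) \<in> K"
      using Q.submoduleE(4)[OF K] by simp
    then show "\<ominus>\<^bsub>M\<^esub> x \<in> quot_preimage M N K"
      using x by (simp add: quot_preimage_def smult_quot_module M.smult_l_minus)
  next
    fix x y assume "x \<in> quot_preimage M N K" "y \<in> quot_preimage M N K"
    then show "x \<oplus>\<^bsub>M\<^esub> y \<in> quot_preimage M N K" unfolding quot_preimage_def
      using Q.submoduleE(5)[OF K] add_quot_module by fastforce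
  next
    fix a x assume "a \<in> carrier R" "x \<in> quot_preimage M N K"
    then show "a \<odot>\<^bsub>M\<^esub> x \<in> quot_preimage M N K" unfolding quot_preimage_def
      using Q.submoduleE(4)[OF K] smult_quot_module by fastforce
  qed (auto simp: quot_preimage_def)
qed

lemma ann_quot_module:
  assumes "I \<subseteq> carrier R"
  shows "ann (quot_module M N) I = (\<lambda>x. N +>\<^bsub>M\<^esub> x) ` colon M N I"
proof -
  have "a \<odot>\<^bsub>quot_module M N\<^esub> (N +>\<^bsub>M\<^esub> x) = \<zero>\<^bsub>quot_module M N\<^esub> \<longleftrightarrow> a \<odot>\<^bsub>M\<^esub> x \<in> N"
    if "a \<in> I" and "x \<in> carrier M" for a x
    using that subsetD[OF assms that(1)]
    by (simp add: smult_quot_module zero_quot_module rcos_eq_submodule_iff)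
  then show ?thesis
    unfolding ann_def colon_def carrier_quot_module by auto
qed

lemma S_comultiplication_quot_module:
  assumes S: "mcs R S" and comult: "S_comultiplication R S M" and copure: "S_copure R S M N"
  shows "S_comultiplication R S (quot_module M N)"
  unfolding S_comultiplication_def
proof (intro allI impI)
  let ?p = "\<lambda>x. N +>\<^bsub>M\<^esub> x"
  fix K assume K: "submodule K R (quot_module M N)"
  define L where "L = quot_preimage M N K"
  have K_image: "K = ?p ` L"
    unfolding L_def using image_quot_preimage module.submoduleE(1)[OF module_quot_module K] by simp
  have L: "submodule L R M" "N \<subseteq> L"
    unfolding L_def using submodule_quot_preimage submodule_subset_quot_preimage K by auto
  obtain s I where s: "s \<in> S" and I: "ideal I R"
    and s_ann: "smult_set M s (ann M I) \<subseteq> L" and L_ann: "L \<subseteq> ann M I"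
    using comult L(1) unfolding S_comultiplication_def by blast
  obtain t where t: "t \<in> S" and t_colon: "smult_set M t (colon M N I) \<subseteq> N <+>\<^bsub>M\<^esub> ann M I"
    using copure I unfolding S_copure_def by blast
  have I_carrier: "I \<subseteq> carrier R" using I by (simp add: additive_subgroup.a_subset ideal.axioms(1))
  have st: "s \<in> carrier R" "t \<in> carrier R" "s \<otimes>\<^bsub>R\<^esub> t \<in> S" using s t S unfolding mcs_def by auto
  have colon_carrier: "colon M N I \<subseteq> carrier M" unfolding colon_def by auto
  have "K \<subseteq> ?p ` colon M N I"
    using K_image L_ann ann_subset_colon[OF N.zero_closed] by blast
  then have "K \<subseteq> ann (quot_module M N) I" by (simp add: ann_quot_module[OF I_carrier])
  moreover have "smult_set (quot_module M N) (s \<otimes>\<^bsub>R\<^esub> t) (ann (quot_module M N) I) \<subseteq> K"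
    using M.smult_colon_subset[OF L st(1,2) s_ann t_colon] K_image
    by (auto simp: ann_quot_module[OF I_carrier] smult_set_quot_module[OF _ colon_carrier] st)
  ultimately show "\<exists>s\<in>S. \<exists>I. ideal I R \<and> smult_set (quot_module M N) s (ann (quot_module M N) I) \<subseteq> K
      \<and> K \<subseteq> ann (quot_module M N) I"
    using st(3) I by blast
qed

end

theorem theorem3p4:
  fixes R :: "('a, 'c) ring_scheme" and M :: "('a, 'b, 'd) module_scheme"
  assumes "cring R" and "\<one>\<^bsub>R\<^esub> \<noteq> \<zero>\<^bsub>R\<^esub>"
    and "mcs R S"
    and "module R M"
    and "S_comultiplication R S M"
    and "submodule N R M"
    and "S_copure R S M N"
  shows "module R (quot_module M N) \<and> S_comultiplication R S (quot_module M N)"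
  using module_quot_module S_comultiplication_quot_module assms(3-7) by blast

end
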